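(* Let $\rho=\sqrt2$ and $Z[\rho]=\{\pm z: z=\sum_{k=0}^n z_k\rho^k,\ n\ge0,\ z_k\in\{0,1\}\}$. Then $\mathbb{Z}$ is a proper subset of $Z[\rho]$. *)

theory Defs
  imports Complex_Main
begin

definition Zrho :: "real \<Rightarrow> real set" where
  "Zrho \<rho> = {s * (\<Sum>k\<le>n. z k * \<rho> ^ k) | s n z.
                 s \<in> {-1, 1} \<and> (\<forall>k\<le>n. z k \<in> {0, 1})}"

end

theory Submission
  imports Defs
begin

text \<open>Since \<open>\<rho>\<^sup>2 = 2\<close>, shifting a digit string by two places doubles its value, so the
  even-indexed digits alone realise the binary expansion of any natural number; the sign then
  covers the negative integers. The inclusion is strict because \<open>\<rho>\<close> itself is a one-digit
  expansion but lies strictly between 1 and 2.\<close>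

definition digit_sums :: "real \<Rightarrow> real set" where
  "digit_sums \<rho> = {(\<Sum>k\<le>n. z k * \<rho> ^ k) | n z. \<forall>k\<le>n. z k \<in> {0, 1}}"

lemma Zrho_eq_signed_digit_sums: "Zrho \<rho> = {s * x | s x. s \<in> {-1, 1} \<and> x \<in> digit_sums \<rho>}"
  unfolding Zrho_def digit_sums_def by blast

lemma zero_in_digit_sums: "0 \<in> digit_sums \<rho>"
  unfolding digit_sums_def by (rule CollectI, rule exI[of _ 0], rule exI[of _ "\<lambda>_. 0"]) simp

lemma power_in_digit_sums: "\<rho> ^ m \<in> digit_sums \<rho>"
  unfolding digit_sums_def
  by (rule CollectI, rule exI[of _ m], rule exI[of _ "\<lambda>k. if k = m then 1 else 0"])
     (simp add: if_distrib[where f = "\<lambda>c. c * _"] cong: if_cong)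

lemma digit_sums_shift2_add_digit:
  assumes "x \<in> digit_sums \<rho>" and "b \<in> {0, 1}"
  shows "\<rho>\<^sup>2 * x + b \<in> digit_sums \<rho>"
proof -
  obtain n z where z: "\<forall>k\<le>n. z k \<in> {0, 1}" and x: "x = (\<Sum>k\<le>n. z k * \<rho> ^ k)"
    using assms(1) unfolding digit_sums_def by blast
  define z' where "z' = (\<lambda>k. if k = 0 then b else if k = 1 then 0 else z (k - 2))"
  have "(\<Sum>k\<le>Suc (Suc n). z' k * \<rho> ^ k) = b + (\<Sum>k\<le>n. z k * \<rho> ^ Suc (Suc k))"
    by (simp add: sum.atMost_Suc_shift z'_def del: sum.atMost_Suc)
  also have "\<dots> = \<rho>\<^sup>2 * x + b"
    by (simp add: x sum_distrib_left power2_eq_square algebra_simps)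
  finally have "\<rho>\<^sup>2 * x + b = (\<Sum>k\<le>Suc (Suc n). z' k * \<rho> ^ k)" by simp
  moreover have "\<forall>k\<le>Suc (Suc n). z' k \<in> {0, 1}"
    using z assms(2) by (auto simp: z'_def)
  ultimately show ?thesis unfolding digit_sums_def by blast
qed

lemma of_nat_in_digit_sums:
  assumes "\<rho>\<^sup>2 = 2"
  shows "real m \<in> digit_sums \<rho>"
proof (induction m rule: less_induct)
  case (less m)
  show ?case
  proof (cases "m = 0")
    case True
    then show ?thesis using zero_in_digit_sums by simp
  next
    case False
    have "real (m div 2) \<in> digit_sums \<rho>" using less False by simp
    moreover have "real (m mod 2) \<in> {0, 1}"
      by (cases "even m") (auto simp: odd_iff_mod_2_eq_one)
    ultimately have "\<rho>\<^sup>2 * real (m div 2) + real (m mod 2) \<in> digit_sums \<rho>"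
      by (rule digit_sums_shift2_add_digit)
    moreover have "2 * real (m div 2) + real (m mod 2) = real m"
      by (metis of_nat_add of_nat_mult of_nat_numeral div_mult_mod_eq mult.commute)
    ultimately show ?thesis using assms by simp
  qed
qed

lemma Ints_subset_Zrho:
  assumes "\<rho>\<^sup>2 = 2"
  shows "\<int> \<subseteq> Zrho \<rho>"
proof
  fix x :: real
  assume "x \<in> \<int>"
  then obtain i where i: "x = of_int i" by (auto elim: Ints_cases)
  have "x = 1 * real (nat i) \<or> x = -1 * real (nat (-i))"
    using i by (cases "i \<ge> 0") auto
  then show "x \<in> Zrho \<rho>"
    unfolding Zrho_eq_signed_digit_sums using of_nat_in_digit_sums[OF assms] by blast
qed

lemma sqrt2_not_Ints: "sqrt 2 \<notin> (\<int> :: real set)"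
proof
  assume "sqrt 2 \<in> (\<int> :: real set)"
  then obtain i where i: "sqrt 2 = of_int i" by (auto elim: Ints_cases)
  have "1 < sqrt (2::real)" by simp
  with sqrt2_less_2 have "1 < i" "i < 2" using i by linarith+
  then show False by linarith
qed

theorem mainTheorem12:
  shows "(\<int> :: real set) \<subset> Zrho (sqrt 2)"
proof -
  have "sqrt 2 \<in> Zrho (sqrt 2)"
    unfolding Zrho_eq_signed_digit_sums using power_in_digit_sums[of "sqrt 2" 1] by force
  with sqrt2_not_Ints Ints_subset_Zrho[of "sqrt 2"] show ?thesis by auto
qed

end
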